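(* Let $r\in\mathbb{C}$, $\lambda\in\mathbb{C}^*$, and let $f\in\mathcal{D}^\omega_{2-r}[\infty]$ be $\lambda$-periodic, i.e. $f(t+1)=\lambda f(t)$. Consider asymptotic expansions of $(Pf)(t)=(i-t)^{2-r}f(t)$ of the form $$(Pf)(t)\sim\sum_{n\ge k}b_nt^{-n}\quad\text{for some }k\in\mathbb{Z},\qquad( * )$$ as real $t\to\pm\infty$ (meaning $(Pf)(t)=\sum_{n=k}^{N-1}b_nt^{-n}+O(t^{-N})$ for every $N\ge k$). (i) If $f$ satisfies $( * )$ both as $t\uparrow\infty$ and as $t\downarrow-\infty$ with the same coefficients $b_n$, then (a) $f$ is a constant function if $\lambda=1$ and $r\in\mathbb{Z}$, and in this case $r\ge k+2$; (b) $f=0$ in all other cases. (ii) Let $\varepsilon\in\{1,-1\}$ and suppose $f$ satisfies $( * )$ as $\varepsilon t\uparrow\infty$. Then (a) if $\lambda=1$ and $r\in\mathbb{Z}_{\ge k+2}$, $f$ is a constant function; (b) otherwise, if $|\lambda|=1$, then $f=0$; (c) otherwise $f(t)\sim0$ (i.e. $f(t)=O(|t|^{-N})$ for all $N$) as $\varepsilon t\uparrow\infty$.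
   Context: $\mathbb{H}^-$ is the lower half-plane. $P\varphi(t)=(i-t)^{2-r}\varphi(t)$ with $\arg(i-t)\in(-\pi/2,3\pi/2)$. $\mathcal{D}^\omega_{2-r}[\infty]$ is the space of holomorphic functions $\varphi$ on $\mathbb{H}^-$ such that $P\varphi$ extends holomorphically to an open subset of $\mathbb{P}^1(\mathbb{C})$ containing $\mathbb{H}^-\cup\mathbb{R}$ (so $f$ is defined and holomorphic on a neighbourhood of $\mathbb{H}^-\cup\mathbb{R}$, in particular on $\mathbb{R}$). *)

theory Defs
  imports "HOL-Complex_Analysis.Complex_Analysis"
begin

definition lower_hp :: "complex set" where
  "lower_hp = {z. Im z < 0}"

text \<open>The operator P. We use the principal branch of powr; for Im t < 1 (in particular on
  the closure of the lower half-plane) Im(i - t) > 0, so arg(i - t) lies in (0, pi) and the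
  principal branch agrees with the paper's branch arg(i - t) in (-pi/2, 3pi/2).\<close>
definition Pop :: "complex \<Rightarrow> (complex \<Rightarrow> complex) \<Rightarrow> complex \<Rightarrow> complex" where
  "Pop r f t = (\<i> - t) powr (2 - r) * f t"

text \<open>The values
  of the (total) function f off the lower half-plane provide the extension.\<close>
definition D_omega_inf :: "complex \<Rightarrow> (complex \<Rightarrow> complex) set" where
  "D_omega_inf r = {f. f holomorphic_on lower_hp \<and>
      (\<exists>U. open U \<and> lower_hp \<union> {z. Im z = 0} \<subseteq> U \<and> Pop r f holomorphic_on U)}"

definition asymp_exp :: "(real \<Rightarrow> complex) \<Rightarrow> int \<Rightarrow> (int \<Rightarrow> complex) \<Rightarrow> real filter \<Rightarrow> bool" where
  "asymp_exp g k b F \<longleftrightarrow> (\<forall>N\<ge>k. \<exists>C. eventually (\<lambda>t.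
      norm (g t - (\<Sum>n\<in>{k..<N}. b n * complex_of_real t powi (- n)))
        \<le> C * \<bar>t\<bar> powr (- real_of_int N)) F)"

definition asymp_zero :: "(real \<Rightarrow> complex) \<Rightarrow> real filter \<Rightarrow> bool" where
  "asymp_zero g F \<longleftrightarrow> (\<forall>N::int. \<exists>C. eventually (\<lambda>t. norm (g t) \<le> C * \<bar>t\<bar> powr (- real_of_int N)) F)"

end

theory Submission
  imports Defs
begin

text \<open>On the real line g(t) = f(t) satisfies g(t + 1) = \<lambda> g(t), and (i - t)^{2-r} g(t) has the
  given expansion. If |\<lambda>| \<noteq> 1, g grows geometrically in one direction, where the polynomial bound
  coming from the expansion forces g = 0, and decays geometrically in the other, where it is
  O(|t|^{-N}) for every N. If |\<lambda>| = 1, |g| is 1-periodic. When all coefficients vanish, g tends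
  to 0, hence g = 0. Otherwise, with b_p the first nonzero coefficient,
  g(t) = (i - t)^{r-2-p} v(t) where v tends to b_p (-1)^p \<noteq> 0; comparing g(t + 1) with g(t), and
  g(m t) with g(t), along integer progressions gives \<lambda> = 1 and m^{r-2-p} = 1 for all m \<ge> 1, so
  r = p + 2 and g is a 1-periodic function with a limit, i.e. a constant. The identity theorem
  carries constancy from the real line to the closed lower half-plane.\<close>

section \<open>The weight (i - t) powr \<beta>\<close>

lemma i_minus_notin_nonpos_Reals: "Im z < 1 \<Longrightarrow> \<i> - z \<notin> \<real>\<^sub>\<le>\<^sub>0"
  by (auto simp: complex_nonpos_Reals_iff)

lemma i_minus_powr_nonzero: "Im z < 1 \<Longrightarrow> (\<i> - z) powr w \<noteq> 0"
  using i_minus_notin_nonpos_Reals by (auto simp: powr_def complex_nonpos_Reals_iff)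

lemma powr_divide_upper_hp:
  fixes z w \<beta> :: complex
  assumes "Im z > 0" "Im w > 0"
  shows "(z / w) powr \<beta> = z powr \<beta> / w powr \<beta>"
proof -
  have "w \<notin> \<real>\<^sub>\<le>\<^sub>0" using assms by (auto simp: complex_nonpos_Reals_iff)
  then have inv: "Ln (inverse w) = - Ln w" by (rule Ln_inverse)
  have "0 < Im (Ln z) \<and> Im (Ln z) < pi" "0 < Im (Ln w) \<and> Im (Ln w) < pi"
    using Im_Ln_pos_lt_imp assms by blast+
  then have "Ln (z * inverse w) = Ln z + Ln (inverse w)"
    using assms by (intro Ln_times_simple) (auto simp: inv)
  then have "Ln (z / w) = Ln z - Ln w" by (simp add: inv divide_inverse)
  then show ?thesis using assms by (auto simp: powr_def exp_diff right_diff_distrib)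
qed

lemma norm_i_minus_powr_le:
  assumes "Re \<beta> \<le> 0"
  shows "norm ((\<i> - complex_of_real t) powr \<beta>) \<le> exp (\<bar>Im \<beta>\<bar> * pi)"
proof -
  define z where "z = \<i> - complex_of_real t"
  have "norm z \<ge> 1" unfolding z_def using abs_Im_le_cmod[of "\<i> - complex_of_real t"] by simp
  then have "norm z powr Re \<beta> \<le> 1"
    using assms powr_mono[of "Re \<beta>" 0 "norm z"] by (auto split: if_splits)
  moreover have "\<bar>Arg z\<bar> \<le> pi" using mpi_less_Arg[of z] Arg_le_pi[of z] by linarith
  then have "\<bar>- Im \<beta> * Arg z\<bar> \<le> \<bar>Im \<beta>\<bar> * pi" by (simp add: abs_mult mult_left_mono)
  then have "exp (- Im \<beta> * Arg z) \<le> exp (\<bar>Im \<beta>\<bar> * pi)" by simp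
  ultimately have "norm z powr Re \<beta> * exp (- Im \<beta> * Arg z) \<le> 1 * exp (\<bar>Im \<beta>\<bar> * pi)"
    by (intro mult_mono) auto
  then show ?thesis by (simp add: z_def norm_powr_complex)
qed

lemma powr_weight_split:
  fixes t :: real and p :: int
  shows "w = (\<i> - complex_of_real t) powr (r - 2 - of_int p)
             * ((\<i> - complex_of_real t) powr (2 - r) * w * (\<i> - complex_of_real t) powi p)"
proof -
  define z where "z = \<i> - complex_of_real t"
  have z0: "z \<noteq> 0" unfolding z_def by (auto simp: complex_eq_iff)
  have "1 = z powr ((r - 2 - of_int p) + (2 - r) + of_int p)" using z0 by (simp add: powr_def)
  also have "\<dots> = z powr (r - 2 - of_int p) * z powr (2 - r) * z powi p"
    using z0 by (simp only: powr_add complex_powr_of_int[of z p] simp_thms)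
  finally show ?thesis by (simp add: z_def[symmetric] algebra_simps)
qed

section \<open>Functions in D_omega_inf r\<close>

lemma D_omega_inf_holomorphic_near_closed_lower_hp:
  assumes "f \<in> D_omega_inf r"
  obtains W where "open W" "{z. Im z \<le> 0} \<subseteq> W" "f holomorphic_on W"
proof -
  from assms obtain U where U: "open U" "lower_hp \<union> {z. Im z = 0} \<subseteq> U" "Pop r f holomorphic_on U"
    unfolding D_omega_inf_def by blast
  define W where "W = U \<inter> {z. Im z < 1}"
  have "open W" unfolding W_def using U(1) by (intro open_Int open_halfspace_Im_lt)
  moreover have "{z. Im z \<le> 0} \<subseteq> W" using U(2) by (force simp: W_def lower_hp_def)
  moreover have "Pop r f holomorphic_on W" using U(3) holomorphic_on_subset W_def by blast
  then have "(\<lambda>z. Pop r f z / (\<i> - z) powr (2 - r)) holomorphic_on W"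
    by (intro holomorphic_intros) (auto simp: W_def i_minus_notin_nonpos_Reals i_minus_powr_nonzero)
  then have "f holomorphic_on W"
    by (rule holomorphic_transform) (auto simp: Pop_def i_minus_powr_nonzero W_def)
  ultimately show ?thesis using that by blast
qed

lemma closure_lower_hp: "closure {z::complex. Im z < 0} = {z. Im z \<le> 0}"
proof -
  have "{z::complex. Im z < 0} = {z. \<i> \<bullet> z < 0}" "{z::complex. Im z \<le> 0} = {z. \<i> \<bullet> z \<le> 0}"
    by (auto simp: inner_complex_def)
  then show ?thesis using closure_halfspace_lt[of \<i> 0] by simp
qed

lemma D_omega_inf_periodic_closed_lower_hp:
  assumes fD: "f \<in> D_omega_inf r" and per: "\<forall>t. Im t < 0 \<longrightarrow> f (t + 1) = lam * f t"
    and z: "Im z \<le> 0"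
  shows "f (z + 1) = lam * f z"
proof -
  obtain W where W: "open W" "{z. Im z \<le> 0} \<subseteq> W" "f holomorphic_on W"
    using D_omega_inf_holomorphic_near_closed_lower_hp[OF fD] by blast
  let ?S = "{z. Im z \<le> 0}"
  have cS: "continuous_on ?S f"
    using W holomorphic_on_imp_continuous_on continuous_on_subset by blast
  have "continuous_on ?S (\<lambda>z. f (z + 1))"
    by (rule continuous_on_compose2[OF cS]) (auto intro!: continuous_intros)
  then have "continuous_on ?S (\<lambda>z. f (z + 1) - lam * f z)"
    using cS by (intro continuous_intros)
  then have "closed {z \<in> ?S. f (z + 1) - lam * f z = 0}"
    by (rule continuous_closed_preimage_constant) (rule closed_halfspace_Im_le)
  moreover have "{z. Im z < 0} \<subseteq> {z \<in> ?S. f (z + 1) - lam * f z = 0}" using per by auto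
  ultimately have "closure {z. Im z < 0} \<subseteq> {z \<in> ?S. f (z + 1) - lam * f z = 0}"
    by (rule closure_minimal[rotated])
  then show ?thesis using z by (auto simp: closure_lower_hp)
qed

lemma D_omega_inf_continuous_on_real:
  assumes "f \<in> D_omega_inf r"
  shows "continuous_on UNIV (\<lambda>t::real. f (complex_of_real t))"
proof -
  obtain W where W: "open W" "{z. Im z \<le> 0} \<subseteq> W" "f holomorphic_on W"
    using D_omega_inf_holomorphic_near_closed_lower_hp[OF assms] by blast
  have "continuous_on W f" using W(3) by (rule holomorphic_on_imp_continuous_on)
  then show ?thesis
    by (rule continuous_on_compose2) (use W(2) in \<open>auto intro!: continuous_intros\<close>)
qed

lemma D_omega_inf_const_on_real_imp_const:
  assumes fD: "f \<in> D_omega_inf r" and const: "\<forall>x::real. f (complex_of_real x) = c"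
    and w: "Im w \<le> 0"
  shows "f w = c"
proof -
  obtain W where W: "open W" "{z. Im z \<le> 0} \<subseteq> W" "f holomorphic_on W"
    using D_omega_inf_holomorphic_near_closed_lower_hp[OF fD] by blast
  \<comment> \<open>The component of W containing the convex closed half-plane is a domain for the identity theorem.\<close>
  define S where "S = connected_component_set W 0"
  have sub: "{z. Im z \<le> 0} \<subseteq> S" unfolding S_def
    by (rule connected_component_maximal) (use W in \<open>auto intro: convex_connected convex_halfspace_Im_le\<close>)
  have "(\<lambda>z. f z - c) holomorphic_on S"
    using W(3) unfolding S_def by (intro holomorphic_intros) (meson connected_component_subset holomorphic_on_subset)
  then have "f w - c = 0"
  proof (rule analytic_continuation[where U = "{z. Im z = 0}" and \<xi> = 0])
    show "open S" unfolding S_def using W(1) by (rule open_connected_component)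
    show "connected S" unfolding S_def by (rule connected_connected_component)
    show "{z. Im z = 0} \<subseteq> S" "0 \<in> S" "w \<in> S" using sub w by auto
    have "\<exists>x\<in>{z. Im z = 0}. x \<noteq> 0 \<and> dist x 0 < e" if "e > 0" for e
      using that by (intro bexI[of _ "complex_of_real (e / 2)"]) (auto simp: dist_norm)
    then show "0 islimpt {z. Im z = 0}" unfolding islimpt_approachable by blast
  next
    fix z assume "z \<in> {z. Im z = 0}"
    then have "z = complex_of_real (Re z)" by (simp add: complex_eq_iff)
    then show "f z - c = 0" using const by (metis eq_iff_diff_eq_0)
  qed
  then show ?thesis by simp
qed

section \<open>Multiplicatively periodic functions on the real line\<close>

lemma mult_periodic_shift_nat:
  fixes G :: "real \<Rightarrow> 'a::comm_ring_1"
  assumes "\<forall>t. G (t + 1) = \<mu> * G t"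
  shows "G (t + real n) = \<mu> ^ n * G t"
proof (induction n)
  case (Suc n)
  have "G (t + real (Suc n)) = G ((t + real n) + 1)" by (simp add: algebra_simps)
  also have "\<dots> = \<mu> * G (t + real n)" using assms by blast
  finally show ?case using Suc by simp
qed simp

lemma mult_periodic_shift_int:
  fixes G :: "real \<Rightarrow> 'a::field"
  assumes per: "\<forall>t. G (t + 1) = \<mu> * G t" and "\<mu> \<noteq> 0"
  shows "G (t + of_int j) = \<mu> powi j * G t"
proof (cases "j \<ge> 0")
  case True
  then obtain n where "j = int n" by (metis nonneg_int_cases)
  then show ?thesis using mult_periodic_shift_nat[OF per, of t n] by simp
next
  case False
  define n where "n = nat (- j)"
  have j: "j = - int n" using False by (simp add: n_def)
  have "G t = \<mu> ^ n * G (t - real n)" using mult_periodic_shift_nat[OF per, of "t - real n" n] by simp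
  then show ?thesis using j \<open>\<mu> \<noteq> 0\<close> by (simp add: power_int_minus field_simps)
qed

lemma mult_periodic_reflect:
  fixes G :: "real \<Rightarrow> 'a::field"
  assumes "\<forall>t. G (t + 1) = \<mu> * G t" and "\<mu> \<noteq> 0"
  shows "\<forall>s. G (- (s + 1)) = inverse \<mu> * G (- s)"
proof
  fix s
  have "G (- s) = G (- (s + 1) + 1)" by simp
  also have "\<dots> = \<mu> * G (- (s + 1))" using assms(1) by blast
  finally have "G (- s) = \<mu> * G (- (s + 1))" .
  then show "G (- (s + 1)) = inverse \<mu> * G (- s)" using assms(2) by simp
qed

lemma filterlim_arith_progression:
  fixes F :: "real filter"
  assumes "F = at_top \<or> F = at_bot"
  obtains \<sigma> :: int where
    "\<And>s m. m > 0 \<Longrightarrow> filterlim (\<lambda>n::nat. s + of_int (\<sigma> * int m * int n)) F sequentially"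
proof -
  have lim: "filterlim (\<lambda>n::nat. s + real m * real n) at_top sequentially" if "m > 0" for s m
    using that by (intro filterlim_tendsto_add_at_top[OF tendsto_const]
        filterlim_tendsto_pos_mult_at_top[OF tendsto_const _ filterlim_real_sequentially]) auto
  from assms show ?thesis
  proof
    assume "F = at_top"
    then show ?thesis using lim by (intro that[of 1]) simp_all
  next
    assume "F = at_bot"
    have "filterlim (\<lambda>n::nat. s - real m * real n) at_bot sequentially" if "m > 0" for s m
      using lim[OF that, of "- s"] by (simp add: filterlim_uminus_at_bot)
    then show ?thesis using \<open>F = at_bot\<close> by (intro that[of "-1"]) simp_all
  qed
qed

lemma periodic_tendsto_imp_const:
  fixes G :: "real \<Rightarrow> 'a::real_normed_field"
  assumes "\<forall>t. G (t + 1) = G t" and "F = at_top \<or> F = at_bot" and "(G \<longlongrightarrow> L) F"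
  shows "G t = L"
proof -
  obtain \<sigma> :: int
    where lim: "\<And>s m. m > 0 \<Longrightarrow> filterlim (\<lambda>n::nat. s + of_int (\<sigma> * int m * int n)) F sequentially"
    using filterlim_arith_progression[OF assms(2)] by blast
  have "(\<lambda>n. G (t + of_int (\<sigma> * int 1 * int n))) \<longlonglongrightarrow> L"
    by (rule filterlim_compose[OF assms(3) lim]) simp
  moreover have "G (t + of_int j) = G t" for j
    using mult_periodic_shift_int[of G 1 t j] assms(1) by simp
  ultimately have "(\<lambda>n. G t) \<longlonglongrightarrow> L" by (simp only:)
  then show ?thesis by (simp add: LIMSEQ_const_iff)
qed

lemma tendsto_poly_exp_0:
  fixes c :: real assumes "c > 0"
  shows "((\<lambda>t. t ^ M * exp (- c * t)) \<longlongrightarrow> 0) at_top"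
proof -
  have "filterlim (\<lambda>t. c * t) at_top at_top"
    by (rule filterlim_tendsto_pos_mult_at_top[OF tendsto_const assms filterlim_ident])
  from filterlim_compose[OF tendsto_power_div_exp_0 this]
  have "((\<lambda>t. (c * t) ^ M / exp (c * t) / c ^ M) \<longlongrightarrow> 0 / c ^ M) at_top"
    by (intro tendsto_divide tendsto_const) (use assms in auto)
  moreover have "(c * t) ^ M / exp (c * t) / c ^ M = t ^ M * exp (- c * t)" for t
    using assms by (simp add: power_mult_distrib exp_minus field_simps)
  ultimately show ?thesis by simp
qed

lemma power_eq_exp_ln_mult: "(x::real) > 0 \<Longrightarrow> x ^ n = exp (ln x * real n)"
  by (simp add: mult.commute[of _ "real n"] exp_of_nat_mult)

lemma mult_periodic_poly_bounded_eq_0: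
  fixes G :: "real \<Rightarrow> 'a::real_normed_field"
  assumes per: "\<forall>t. G (t + 1) = \<mu> * G t" and \<mu>: "norm \<mu> > 1"
    and bound: "eventually (\<lambda>t. norm (G t) \<le> K * \<bar>t\<bar> ^ M) at_top"
  shows "G s = 0"
proof (rule ccontr)
  assume "G s \<noteq> 0"
  have "\<mu> \<noteq> 0" using \<mu> by auto
  define c where "c = ln (norm \<mu>)"
  have c: "c > 0" using \<mu> unfolding c_def by (intro ln_gt_zero)
  have s_n: "filterlim (\<lambda>n. s + real n) at_top sequentially"
    by (rule filterlim_tendsto_add_at_top[OF tendsto_const filterlim_real_sequentially])
  have "(\<lambda>n. K * exp (c * s) * ((s + real n) ^ M * exp (- c * (s + real n)))) \<longlonglongrightarrow> K * exp (c * s) * 0"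
    by (intro tendsto_mult tendsto_const filterlim_compose[OF tendsto_poly_exp_0[OF c] s_n])
  then have "eventually (\<lambda>n. K * exp (c * s) * ((s + real n) ^ M * exp (- c * (s + real n))) < norm (G s)) sequentially"
    using \<open>G s \<noteq> 0\<close> by (intro order_tendstoD(2)) auto
  moreover have "eventually (\<lambda>n. norm (G (s + real n)) \<le> K * \<bar>s + real n\<bar> ^ M) sequentially"
    using filterlim_iff[THEN iffD1, OF s_n] bound by blast
  moreover have "eventually (\<lambda>n. s + real n \<ge> 0) sequentially"
    using filterlim_iff[THEN iffD1, OF s_n] eventually_ge_at_top[of 0] by blast
  ultimately have "eventually (\<lambda>n. False) sequentially"
  proof eventually_elim
    case (elim n)
    have "norm \<mu> ^ n = exp (c * real n)"
      using power_eq_exp_ln_mult[of "norm \<mu>" n] \<open>\<mu> \<noteq> 0\<close> by (simp add: c_def)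
    moreover have "norm (G (s + real n)) = norm \<mu> ^ n * norm (G s)"
      using mult_periodic_shift_nat[OF per, of s n] by (simp add: norm_mult norm_power)
    ultimately have "exp (c * real n) * norm (G s) \<le> K * (s + real n) ^ M"
      using elim(2,3) by simp
    then have "norm (G s) \<le> K * (s + real n) ^ M / exp (c * real n)"
      by (simp add: pos_le_divide_eq mult.commute)
    also have "\<dots> = K * (s + real n) ^ M * (exp (c * s) * exp (- c * (s + real n)))"
      by (simp add: divide_inverse exp_add[symmetric] exp_minus[symmetric] algebra_simps)
    finally show False using elim(1) by (simp add: mult_ac)
  qed
  then show False by simp
qed

lemma mult_periodic_asymp_zero:
  fixes G :: "real \<Rightarrow> complex"
  assumes per: "\<forall>t. G (t + 1) = \<mu> * G t" and "0 < norm \<mu>" "norm \<mu> < 1"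
    and cont: "continuous_on UNIV G"
  shows "asymp_zero G at_top"
  unfolding asymp_zero_def
proof
  fix N :: int
  obtain B where B0: "B \<ge> 0" and B: "\<And>x. x \<in> {0..1} \<Longrightarrow> norm (G x) \<le> B"
    using continuous_on_compact_bound[of "{0..1::real}" G] cont continuous_on_subset by blast
  define x where "x = norm \<mu>"
  have x: "0 < x" "x < 1" using assms(2,3) by (simp_all add: x_def)
  define c where "c = - ln x"
  have c: "c > 0" using x unfolding c_def by simp
  define K where "K = nat \<bar>N\<bar>"
  have "eventually (\<lambda>t. t ^ K * exp (- c * t) < 1) at_top"
    by (rule order_tendstoD(2)[OF tendsto_poly_exp_0[OF c]]) simp
  then have "eventually (\<lambda>t. norm (G t) \<le> (B / x) * \<bar>t\<bar> powr (- real_of_int N)) at_top"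
    using eventually_ge_at_top[of 1]
  proof eventually_elim
    case (elim t)
    define n where "n = nat \<lfloor>t\<rfloor>"
    have tn: "real n \<le> t" "t < real n + 1" unfolding n_def using elim(2) by linarith+
    have "norm (G t) = x ^ n * norm (G (t - real n))"
      using mult_periodic_shift_nat[OF per, of "t - real n" n] by (simp add: x_def norm_mult norm_power)
    also have "\<dots> \<le> x ^ n * B" using B[of "t - real n"] tn x by (intro mult_left_mono) auto
    also have "x ^ n = exp (- c * real n)"
      using power_eq_exp_ln_mult[of x n] x by (simp add: c_def)
    also have "exp (- c * real n) \<le> exp (- c * (t - 1))" using tn c by (simp add: mult_left_mono)
    also have "exp (- c * (t - 1)) = exp (- c * t) / x"
      using x by (simp add: c_def exp_diff algebra_simps exp_minus)
    also have "exp (- c * t) \<le> t powr (- real_of_int N)"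
    proof -
      have "exp (- c * t) < 1 / t ^ K" using elim(1) elim(2) by (simp add: field_simps)
      also have "1 / t ^ K = t powr (- real K)"
        using elim(2) by (simp add: powr_minus powr_realpow divide_inverse)
      also have "\<dots> \<le> t powr (- real_of_int N)" using elim(2) unfolding K_def by (intro powr_mono) auto
      finally show ?thesis by simp
    qed
    finally have "norm (G t) \<le> t powr (- real_of_int N) / x * B"
      using B0 x by (simp add: divide_right_mono mult_right_mono)
    then show ?case using elim(2) by (simp add: field_simps)
  qed
  then show "\<exists>C. eventually (\<lambda>t. norm (G t) \<le> C * \<bar>t\<bar> powr (- real_of_int N)) at_top" by blast
qed

lemma eventually_at_bot_iff_mirror:
  "eventually P (at_bot :: real filter) \<longleftrightarrow> eventually (\<lambda>s. P (- s)) at_top"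
  by (simp add: at_bot_mirror eventually_filtermap)

lemma mult_periodic_growing_side_eq_0:
  fixes G :: "real \<Rightarrow> complex"
  assumes per: "\<forall>t. G (t + 1) = \<mu> * G t" and "\<mu> \<noteq> 0"
    and side: "(F = at_top \<and> norm \<mu> > 1) \<or> (F = at_bot \<and> norm \<mu> < 1)"
    and bound: "eventually (\<lambda>t. norm (G t) \<le> K * \<bar>t\<bar> ^ M) F"
  shows "G s = 0"
  using side
proof (elim disjE conjE)
  assume "F = at_top" "norm \<mu> > 1"
  then have "eventually (\<lambda>t. norm (G t) \<le> K * \<bar>t\<bar> ^ M) at_top" using bound by simp
  then show ?thesis by (rule mult_periodic_poly_bounded_eq_0[OF per \<open>norm \<mu> > 1\<close>])
next
  assume "F = at_bot" "norm \<mu> < 1"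
  then have "norm (inverse \<mu>) > 1" using \<open>\<mu> \<noteq> 0\<close> by (simp add: norm_inverse one_less_inverse)
  moreover have "eventually (\<lambda>t. norm (G (- t)) \<le> K * \<bar>t\<bar> ^ M) at_top"
    using bound \<open>F = at_bot\<close> by (simp add: eventually_at_bot_iff_mirror)
  ultimately have "G (- (- s)) = 0"
    by (rule mult_periodic_poly_bounded_eq_0[OF mult_periodic_reflect[OF per \<open>\<mu> \<noteq> 0\<close>]])
  then show ?thesis by simp
qed

lemma mult_periodic_decaying_side_asymp_zero:
  fixes G :: "real \<Rightarrow> complex"
  assumes per: "\<forall>t. G (t + 1) = \<mu> * G t" and "\<mu> \<noteq> 0" and cont: "continuous_on UNIV G"
    and side: "(F = at_top \<and> norm \<mu> < 1) \<or> (F = at_bot \<and> norm \<mu> > 1)"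
  shows "asymp_zero G F"
  using side
proof (elim disjE conjE)
  assume "F = at_top" "norm \<mu> < 1"
  have "0 < norm \<mu>" using \<open>\<mu> \<noteq> 0\<close> by simp
  from mult_periodic_asymp_zero[OF per this \<open>norm \<mu> < 1\<close> cont] show ?thesis using \<open>F = at_top\<close> by simp
next
  assume "F = at_bot" "norm \<mu> > 1"
  then have "0 < norm (inverse \<mu>)" "norm (inverse \<mu>) < 1"
    using \<open>\<mu> \<noteq> 0\<close> by (simp_all add: norm_inverse inverse_less_1_iff)
  moreover have "continuous_on UNIV (\<lambda>t. G (- t))"
    by (rule continuous_on_compose2[OF cont continuous_on_minus[OF continuous_on_id]]) simp
  ultimately have "asymp_zero (\<lambda>t. G (- t)) at_top"
    by (rule mult_periodic_asymp_zero[OF mult_periodic_reflect[OF per \<open>\<mu> \<noteq> 0\<close>]])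
  then show ?thesis using \<open>F = at_bot\<close> by (simp add: asymp_zero_def eventually_at_bot_iff_mirror)
qed

section \<open>Consequences of an asymptotic expansion\<close>

lemma norm_le_weighted:
  assumes "Re r - 2 \<le> of_int p"
  shows "norm w \<le> exp (\<bar>Im r\<bar> * pi)
           * norm ((\<i> - complex_of_real t) powr (2 - r) * w * (\<i> - complex_of_real t) powi p)"
proof -
  have "norm w = norm ((\<i> - complex_of_real t) powr (r - 2 - of_int p))
          * norm ((\<i> - complex_of_real t) powr (2 - r) * w * (\<i> - complex_of_real t) powi p)"
    by (subst powr_weight_split[of w t r p]) (simp only: norm_mult)
  also have "\<dots> \<le> exp (\<bar>Im r\<bar> * pi)
          * norm ((\<i> - complex_of_real t) powr (2 - r) * w * (\<i> - complex_of_real t) powi p)"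
    using norm_i_minus_powr_le[of "r - 2 - of_int p" t] assms by (intro mult_right_mono) auto
  finally show ?thesis .
qed

lemma eventually_abs_ge_at_infinity:
  assumes "F \<le> at_infinity" shows "eventually (\<lambda>t::real. \<bar>t\<bar> \<ge> c) F"
proof -
  have "eventually (\<lambda>t::real. \<bar>t\<bar> \<ge> c) at_infinity"
    unfolding eventually_at_infinity by auto
  then show ?thesis using assms filter_leD by blast
qed

lemma i_minus_over_powi_tendsto:
  assumes "F \<le> at_infinity"
  shows "((\<lambda>t. ((\<i> - complex_of_real t) / complex_of_real t) powi p) \<longlongrightarrow> (-1) powi p) F"
proof -
  have "((\<lambda>t::real. inverse t) \<longlongrightarrow> 0) F"
    using tendsto_mono[OF assms tendsto_inverse_0] by simp
  then have "((\<lambda>t. \<i> * complex_of_real (inverse t) - 1) \<longlongrightarrow> \<i> * of_real 0 - 1) F"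
    by (intro tendsto_intros)
  then have "((\<lambda>t. (\<i> * complex_of_real (inverse t) - 1) powi p) \<longlongrightarrow> (-1) powi p) F"
    by (intro tendsto_power_int) auto
  moreover have "eventually (\<lambda>t. (\<i> * complex_of_real (inverse t) - 1) powi p =
        ((\<i> - complex_of_real t) / complex_of_real t) powi p) F"
    using eventually_abs_ge_at_infinity[OF assms, of 1]
    by eventually_elim (auto simp: field_simps)
  ultimately show ?thesis by (rule Lim_transform_eventually)
qed

lemma asymp_exp_leading_coeff:
  assumes F: "F \<le> at_infinity" and ae: "asymp_exp h k b F" and "k \<le> p"
    and zero: "\<And>n. k \<le> n \<Longrightarrow> n < p \<Longrightarrow> b n = 0"
  shows "((\<lambda>t. h t * complex_of_real t powi p) \<longlongrightarrow> b p) F"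
proof -
  have "k \<le> p + 1" using \<open>k \<le> p\<close> by simp
  then obtain C where C: "eventually (\<lambda>t. norm (h t - (\<Sum>n\<in>{k..<p+1}. b n * complex_of_real t powi (- n)))
      \<le> C * \<bar>t\<bar> powr (- real_of_int (p + 1))) F"
    using ae unfolding asymp_exp_def by blast
  have sum: "(\<Sum>n\<in>{k..<p+1}. b n * complex_of_real t powi (- n)) = b p * complex_of_real t powi (- p)" for t
  proof -
    have "{k..<p+1} = insert p {k..<p}" using \<open>k \<le> p\<close> by auto
    then show ?thesis using zero by (simp add: sum.neutral)
  qed
  have "eventually (\<lambda>t. norm (h t * complex_of_real t powi p - b p) \<le> \<bar>C\<bar> * inverse \<bar>t\<bar>) F"
    using C eventually_abs_ge_at_infinity[OF F, of 1]
  proof eventually_elim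
    case (elim t)
    then have t0: "t \<noteq> 0" by auto
    have "h t * complex_of_real t powi p - b p
        = (h t - b p * complex_of_real t powi (- p)) * complex_of_real t powi p"
      using t0 by (simp add: algebra_simps power_int_minus)
    then have "norm (h t * complex_of_real t powi p - b p)
        = norm (h t - b p * complex_of_real t powi (- p)) * \<bar>t\<bar> powi p"
      by (simp add: norm_mult norm_power_int)
    also have "\<dots> \<le> C * \<bar>t\<bar> powr real_of_int (- (p + 1)) * \<bar>t\<bar> powi p"
      using elim(1) by (intro mult_right_mono) (auto simp: sum)
    also have "\<bar>t\<bar> powr real_of_int (- (p + 1)) = \<bar>t\<bar> powi (- (p + 1))"
      using t0 by (intro powr_real_of_int') auto
    also have "C * \<bar>t\<bar> powi (- (p + 1)) * \<bar>t\<bar> powi p = C * inverse \<bar>t\<bar>"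
    proof -
      have "\<bar>t\<bar> powi (- (p + 1)) * \<bar>t\<bar> powi p = \<bar>t\<bar> powi (- (p + 1) + p)"
        by (rule power_int_add[symmetric]) (use t0 in simp)
      then show ?thesis by (simp add: mult.assoc)
    qed
    also have "\<dots> \<le> \<bar>C\<bar> * inverse \<bar>t\<bar>" by (intro mult_right_mono) auto
    finally show ?case .
  qed
  moreover have "((\<lambda>t. \<bar>C\<bar> * inverse \<bar>t\<bar>) \<longlongrightarrow> 0) F"
    using tendsto_mult_right_zero[OF tendsto_rabs_zero[OF tendsto_mono[OF F tendsto_inverse_0]]]
    by simp
  ultimately have "((\<lambda>t. h t * complex_of_real t powi p - b p) \<longlongrightarrow> 0) F"
    by (rule Lim_null_comparison)
  then show ?thesis by (simp add: LIM_zero_iff)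
qed

lemma asymp_exp_weighted_tendsto:
  assumes F: "F \<le> at_infinity" and ae: "asymp_exp h k b F" and "k \<le> p"
    and zero: "\<And>n. k \<le> n \<Longrightarrow> n < p \<Longrightarrow> b n = 0"
  shows "((\<lambda>t. h t * (\<i> - complex_of_real t) powi p) \<longlongrightarrow> b p * (-1) powi p) F"
proof -
  have "((\<lambda>t. (h t * complex_of_real t powi p) * ((\<i> - complex_of_real t) / complex_of_real t) powi p)
          \<longlongrightarrow> b p * (-1) powi p) F"
    by (intro tendsto_mult asymp_exp_leading_coeff[OF assms] i_minus_over_powi_tendsto[OF F])
  moreover have "eventually (\<lambda>t. (h t * complex_of_real t powi p) * ((\<i> - complex_of_real t) / complex_of_real t) powi p
      = h t * (\<i> - complex_of_real t) powi p) F"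
    using eventually_abs_ge_at_infinity[OF F, of 1] by eventually_elim (auto simp: power_int_divide_distrib)
  ultimately show ?thesis by (rule Lim_transform_eventually)
qed

lemma asymp_exp_zero_coeffs_tendsto_0:
  fixes g :: "real \<Rightarrow> complex"
  assumes F: "F \<le> at_infinity"
    and ae: "asymp_exp (\<lambda>t. (\<i> - complex_of_real t) powr (2 - r) * g t) k b F"
    and zero: "\<And>n. k \<le> n \<Longrightarrow> b n = 0"
  shows "(g \<longlongrightarrow> 0) F"
proof (rule Lim_null_comparison)
  define p where "p = max k \<lceil>Re r - 2\<rceil>"
  have p: "k \<le> p" "Re r - 2 \<le> of_int p" unfolding p_def by linarith+
  show "eventually (\<lambda>t. norm (g t) \<le> exp (\<bar>Im r\<bar> * pi)
      * norm ((\<i> - complex_of_real t) powr (2 - r) * g t * (\<i> - complex_of_real t) powi p)) F"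
    using norm_le_weighted[OF p(2)] by simp
  have "((\<lambda>t. (\<i> - complex_of_real t) powr (2 - r) * g t * (\<i> - complex_of_real t) powi p) \<longlongrightarrow> 0) F"
    using asymp_exp_weighted_tendsto[OF F ae p(1)] zero p(1) by simp
  then show "((\<lambda>t. exp (\<bar>Im r\<bar> * pi)
      * norm ((\<i> - complex_of_real t) powr (2 - r) * g t * (\<i> - complex_of_real t) powi p)) \<longlongrightarrow> 0) F"
    by (intro tendsto_mult_right_zero tendsto_norm_zero)
qed

lemma asymp_exp_polynomial_bound:
  fixes g :: "real \<Rightarrow> complex"
  assumes F: "F \<le> at_infinity"
    and ae: "asymp_exp (\<lambda>t. (\<i> - complex_of_real t) powr (2 - r) * g t) k b F"
  obtains K M where "eventually (\<lambda>t. norm (g t) \<le> K * \<bar>t\<bar> ^ M) F"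
proof -
  define q where "q = nat (max k \<lceil>Re r - 2\<rceil>)"
  have q: "k \<le> int q" "Re r - 2 \<le> of_int (int q)" unfolding q_def by linarith+
  obtain C where C: "eventually (\<lambda>t. norm ((\<i> - complex_of_real t) powr (2 - r) * g t)
      \<le> C * \<bar>t\<bar> powr (- real_of_int k)) F"
    using ae unfolding asymp_exp_def by fastforce
  have "eventually (\<lambda>t. norm (g t) \<le> (exp (\<bar>Im r\<bar> * pi) * C * 2 ^ q) * \<bar>t\<bar> ^ nat (int q - k)) F"
    using C eventually_abs_ge_at_infinity[OF F, of 1]
  proof eventually_elim
    case (elim t)
    have "norm (\<i> - complex_of_real t) \<le> 2 * \<bar>t\<bar>"
      using norm_triangle_ineq4[of \<i> "complex_of_real t"] elim(2) by simp
    then have i_t: "norm (\<i> - complex_of_real t) ^ q \<le> 2 ^ q * \<bar>t\<bar> ^ q"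
      by (metis norm_ge_zero power_mono power_mult_distrib)
    have t_pow: "\<bar>t\<bar> powr (- real_of_int k) * \<bar>t\<bar> ^ q = \<bar>t\<bar> ^ nat (int q - k)"
      using elim(2) q(1)
      by (simp add: powr_realpow[symmetric] powr_add[symmetric] flip: powr_real_of_int')
    have "norm (g t) \<le> exp (\<bar>Im r\<bar> * pi)
        * (norm ((\<i> - complex_of_real t) powr (2 - r) * g t) * norm (\<i> - complex_of_real t) ^ q)"
      using norm_le_weighted[OF q(2), of "g t" t] by (simp add: norm_mult norm_power)
    also have "\<dots> \<le> exp (\<bar>Im r\<bar> * pi) * (C * \<bar>t\<bar> powr (- real_of_int k) * (2 ^ q * \<bar>t\<bar> ^ q))"
      using elim(1) i_t order_trans[OF norm_ge_zero elim(1)] by (intro mult_left_mono mult_mono) auto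
    also have "\<dots> = (exp (\<bar>Im r\<bar> * pi) * C * 2 ^ q) * (\<bar>t\<bar> powr (- real_of_int k) * \<bar>t\<bar> ^ q)"
      by (simp add: ac_simps)
    finally show ?case by (simp only: t_pow)
  qed
  then show ?thesis by (rule that)
qed

section \<open>The unimodular case\<close>

lemma first_nonzero_coeff:
  fixes b :: "int \<Rightarrow> 'a::zero"
  assumes "k \<le> n" "b n \<noteq> 0"
  obtains p where "k \<le> p" "b p \<noteq> 0" "\<And>j. k \<le> j \<Longrightarrow> j < p \<Longrightarrow> b j = 0"
proof -
  define i where "i = (LEAST i::nat. b (k + int i) \<noteq> 0)"
  have "b (k + int i) \<noteq> 0"
    unfolding i_def by (rule LeastI[of _ "nat (n - k)"]) (use assms in simp)
  moreover have "b j = 0" if "k \<le> j" "j < k + int i" for j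
  proof -
    have "nat (j - k) < i" using that by linarith
    then have "b (k + int (nat (j - k))) = 0" unfolding i_def using not_less_Least by blast
    then show ?thesis using that by simp
  qed
  ultimately show ?thesis using that[of "k + int i"] by simp
qed

lemma powr_ratio_tendsto:
  fixes a c :: "'x \<Rightarrow> real"
  assumes c: "filterlim c at_infinity F" and ac: "((\<lambda>x. a x / c x) \<longlongrightarrow> \<mu>) F" and "\<mu> > 0"
  shows "((\<lambda>x. (\<i> - complex_of_real (a x)) powr \<beta> / (\<i> - complex_of_real (c x)) powr \<beta>)
           \<longlongrightarrow> complex_of_real \<mu> powr \<beta>) F"
\<comment> \<open>(i - a) / (i - c) = (i/c - a/c) / (i/c - 1) tends to \<mu>, and the principal power splits over the
  quotient because i - a and i - c both lie in the upper half-plane.\<close>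
proof -
  have "((\<lambda>x. inverse (c x)) \<longlongrightarrow> 0) F"
    using filterlim_compose[OF tendsto_inverse_0 c] .
  then have "((\<lambda>x. (\<i> * complex_of_real (inverse (c x)) - complex_of_real (a x / c x)) /
              (\<i> * complex_of_real (inverse (c x)) - 1))
        \<longlongrightarrow> (\<i> * complex_of_real 0 - complex_of_real \<mu>) / (\<i> * complex_of_real 0 - 1)) F"
    using ac by (intro tendsto_intros) auto
  then have "((\<lambda>x. ((\<i> * complex_of_real (inverse (c x)) - complex_of_real (a x / c x)) /
              (\<i> * complex_of_real (inverse (c x)) - 1)) powr \<beta>) \<longlongrightarrow> complex_of_real \<mu> powr \<beta>) F"
    using \<open>\<mu> > 0\<close> by (intro tendsto_powr_complex) (auto simp: complex_nonpos_Reals_iff)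
  moreover have "eventually (\<lambda>x. c x \<noteq> 0) F"
    using filterlim_at_infinity_imp_eventually_ne[OF c] .
  then have "eventually (\<lambda>x. ((\<i> * complex_of_real (inverse (c x)) - complex_of_real (a x / c x)) /
              (\<i> * complex_of_real (inverse (c x)) - 1)) powr \<beta> =
        (\<i> - complex_of_real (a x)) powr \<beta> / (\<i> - complex_of_real (c x)) powr \<beta>) F"
  proof eventually_elim
    case (elim x)
    have "\<i> - complex_of_real (c x) \<noteq> 0" by (auto simp: complex_eq_iff)
    then have "(\<i> * complex_of_real (inverse (c x)) - complex_of_real (a x / c x)) /
              (\<i> * complex_of_real (inverse (c x)) - 1) = (\<i> - complex_of_real (a x)) / (\<i> - complex_of_real (c x))"
      using elim by (simp add: field_simps)
    then show ?case by (simp add: powr_divide_upper_hp)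
  qed
  ultimately show ?thesis by (rule Lim_transform_eventually)
qed

lemma weighted_ratio_tendsto:
  fixes a c :: "'x \<Rightarrow> real" and g v :: "real \<Rightarrow> complex"
  assumes F: "F \<le> at_infinity" and v: "(v \<longlongrightarrow> v0) F" "v0 \<noteq> 0"
    and g: "\<And>t. g t = (\<i> - complex_of_real t) powr \<beta> * v t"
    and a: "filterlim a F G" and c: "filterlim c F G"
    and ac: "((\<lambda>x. a x / c x) \<longlongrightarrow> \<mu>) G" "\<mu> > 0"
  shows "((\<lambda>x. g (a x) / g (c x)) \<longlongrightarrow> complex_of_real \<mu> powr \<beta>) G"
\<comment> \<open>No nonvanishing hypothesis is needed: (x y) / (z w) = (x / z) (y / w) holds even when z w = 0.\<close>
proof -
  have "((\<lambda>x. (\<i> - complex_of_real (a x)) powr \<beta> / (\<i> - complex_of_real (c x)) powr \<beta>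
          * (v (a x) / v (c x))) \<longlongrightarrow> complex_of_real \<mu> powr \<beta> * (v0 / v0)) G"
    using filterlim_mono[OF c F order_refl]
    by (intro tendsto_mult powr_ratio_tendsto ac tendsto_divide filterlim_compose[OF v(1)] a c v(2))
  then show ?thesis using v(2) by (simp add: g)
qed

lemma nat_powr_eq_1_imp_0:
  fixes \<beta> :: complex
  assumes "\<And>m::nat. m \<ge> 1 \<Longrightarrow> complex_of_real (real m) powr \<beta> = 1"
  shows "\<beta> = 0"
proof -
  have exp1: "exp (\<beta> * complex_of_real (ln (real m))) = 1" if "m \<ge> 1" for m :: nat
    using assms[OF that] that by (simp add: powr_def Ln_of_real)
  have "exp (\<beta> * complex_of_real (ln (real 2))) = 1" by (rule exp1) simp
  then have re: "Re \<beta> = 0" unfolding exp_eq_1 by simp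
  define M :: nat where "M = nat \<lceil>\<bar>Im \<beta>\<bar>\<rceil> + 1"
  have M: "M \<ge> 1" "\<bar>Im \<beta>\<bar> < real M" unfolding M_def by linarith+
  obtain n0 n1 :: int where "Im \<beta> * ln (real M) = of_int (2 * n0) * pi"
    and "Im \<beta> * ln (real (M + 1)) = of_int (2 * n1) * pi"
    using exp1[OF M(1)] exp1[of "M + 1"] unfolding exp_eq_1 by auto
  then have diff: "Im \<beta> * (ln (real (M + 1)) - ln (real M)) = 2 * pi * of_int (n1 - n0)"
    by (simp add: algebra_simps)
  have ln_pos: "0 < ln (real (M + 1)) - ln (real M)" using M by simp
  have "1 + 1 / real M = real (M + 1) / real M" using M by (simp add: field_simps)
  then have "ln (real (M + 1)) - ln (real M) = ln (1 + 1 / real M)" using M by (simp add: ln_div)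
  also have "\<dots> \<le> 1 / real M" by (rule ln_add_one_self_le_self) simp
  finally have "ln (real (M + 1)) - ln (real M) \<le> 1 / real M" .
  then have "\<bar>Im \<beta> * (ln (real (M + 1)) - ln (real M))\<bar> \<le> \<bar>Im \<beta>\<bar> * (1 / real M)"
    using ln_pos unfolding abs_mult by (intro mult_left_mono) auto
  also have "\<dots> < 1" using M by (simp add: field_simps)
  finally have "\<bar>2 * pi * of_int (n1 - n0)\<bar> < 1" by (simp only: diff)
  then have "n1 = n0"
  proof (rule contrapos_pp)
    assume "n1 \<noteq> n0"
    then have "1 \<le> \<bar>real_of_int (n1 - n0)\<bar>" by linarith
    then have "2 * pi * 1 \<le> \<bar>2 * pi * of_int (n1 - n0)\<bar>" by (simp add: abs_mult)
    then show "\<not> \<bar>2 * pi * of_int (n1 - n0)\<bar> < 1" using pi_gt3 by linarith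
  qed
  then have "Im \<beta> = 0" using diff ln_pos by simp
  then show ?thesis using re by (simp add: complex_eq_iff)
qed

lemma asymp_powr_progression_ratio:
  fixes g v :: "real \<Rightarrow> complex" and F :: "real filter"
  assumes F: "F = at_top \<or> F = at_bot"
    and g_v: "\<And>t. g t = (\<i> - complex_of_real t) powr \<beta> * v t"
    and v: "(v \<longlongrightarrow> v0) F" "v0 \<noteq> 0"
  obtains \<sigma> :: int where
    "\<And>s m. m > 0 \<Longrightarrow> ((\<lambda>n. g (s + of_int (\<sigma> * int m * int n)) / g (of_int (\<sigma> * int n)))
        \<longlongrightarrow> complex_of_real (real m) powr \<beta>) sequentially"
    "eventually (\<lambda>n. g (of_int (\<sigma> * int n)) \<noteq> 0) sequentially"
proof -
  have F_inf: "F \<le> at_infinity" using F at_top_le_at_infinity at_bot_le_at_infinity by auto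
  obtain \<sigma> :: int
    where lim: "\<And>s m. m > 0 \<Longrightarrow> filterlim (\<lambda>n::nat. s + of_int (\<sigma> * int m * int n)) F sequentially"
    using filterlim_arith_progression[OF F] by blast
  define c where "c = (\<lambda>n::nat. real_of_int (\<sigma> * int n))"
  have c: "filterlim c F sequentially" using lim[of 1 0] by (simp add: c_def)
  have c_inf: "filterlim c at_infinity sequentially" by (rule filterlim_mono[OF c F_inf order_refl])
  have c_ne: "eventually (\<lambda>n. c n \<noteq> 0) sequentially"
    by (rule filterlim_at_infinity_imp_eventually_ne[OF c_inf])
  have ratio: "((\<lambda>n. g (s + of_int (\<sigma> * int m * int n)) / g (c n))
      \<longlongrightarrow> complex_of_real (real m) powr \<beta>) sequentially" if "m > 0" for s m
  proof (rule weighted_ratio_tendsto[OF F_inf v g_v lim[OF that] c])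
    show "((\<lambda>n. (s + of_int (\<sigma> * int m * int n)) / c n) \<longlongrightarrow> real m) sequentially"
    proof (rule Lim_transform_eventually)
      show "((\<lambda>n. real m + s * inverse (c n)) \<longlongrightarrow> real m) sequentially"
        using tendsto_add[OF tendsto_const tendsto_mult_right_zero[OF
            filterlim_compose[OF tendsto_inverse_0 c_inf]], of "real m" s] by simp
      show "eventually (\<lambda>n. real m + s * inverse (c n) = (s + of_int (\<sigma> * int m * int n)) / c n) sequentially"
        using c_ne by eventually_elim (simp add: c_def field_simps)
    qed
    show "real m > 0" using that by simp
  qed
  have "\<i> \<noteq> complex_of_real t" for t by (simp add: complex_eq_iff)
  then have "eventually (\<lambda>t. g t \<noteq> 0) F"
    using tendsto_imp_eventually_ne[OF v] by (simp add: g_v)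
  then have "eventually (\<lambda>n. g (c n) \<noteq> 0) sequentially"
    using c filterlim_iff by blast
  with ratio show ?thesis using that unfolding c_def by blast
qed

text \<open>Along the progression \<sigma>n, the ratio of g at (s + \<sigma>mn) and at \<sigma>n tends to m^\<beta>; with s = 1, m = 1
  this ratio is \<lambda>, and once \<lambda> = 1 it is 1 for s = 0 and every m.\<close>

lemma mult_periodic_asymp_powr:
  fixes g v :: "real \<Rightarrow> complex" and F :: "real filter"
  assumes F: "F = at_top \<or> F = at_bot"
    and per: "\<forall>t. g (t + 1) = lam * g t" and "lam \<noteq> 0"
    and g_v: "\<And>t. g t = (\<i> - complex_of_real t) powr \<beta> * v t"
    and v: "(v \<longlongrightarrow> v0) F" "v0 \<noteq> 0"
  shows "lam = 1" and "\<beta> = 0"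
proof -
  obtain \<sigma> :: int where ratio: "\<And>s m. m > 0 \<Longrightarrow>
      ((\<lambda>n. g (s + of_int (\<sigma> * int m * int n)) / g (of_int (\<sigma> * int n)))
        \<longlongrightarrow> complex_of_real (real m) powr \<beta>) sequentially"
    and ne: "eventually (\<lambda>n. g (of_int (\<sigma> * int n)) \<noteq> 0) sequentially"
    using asymp_powr_progression_ratio[OF F g_v v] by blast
  have per': "g (1 + t) = lam * g t" for t using per[rule_format, of t] by (simp add: add.commute)
  have "eventually (\<lambda>n. g (1 + of_int (\<sigma> * int 1 * int n)) / g (of_int (\<sigma> * int n)) = lam) sequentially"
    using ne by eventually_elim (simp add: per')
  with ratio[of 1 1] have "((\<lambda>n. lam) \<longlongrightarrow> complex_of_real (real 1) powr \<beta>) sequentially"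
    by (intro Lim_transform_eventually[of _ _ _ "\<lambda>n. lam"]) simp_all
  then show "lam = 1" by (simp add: LIMSEQ_const_iff powr_def)
  then have shift: "g (s + of_int j) = g s" for s j
    using mult_periodic_shift_int[OF per \<open>lam \<noteq> 0\<close>] by simp
  show "\<beta> = 0"
  proof (rule nat_powr_eq_1_imp_0)
    fix m :: nat assume "m \<ge> 1"
    have same: "g (0 + of_int (\<sigma> * int m * int n)) = g (of_int (\<sigma> * int n))" for n
      using shift[of 0 "\<sigma> * int m * int n"] shift[of 0 "\<sigma> * int n"] by simp
    have "eventually (\<lambda>n. g (0 + of_int (\<sigma> * int m * int n)) / g (of_int (\<sigma> * int n)) = 1) sequentially"
      using ne by eventually_elim (simp only: same, simp)
    moreover have "((\<lambda>n. g (0 + of_int (\<sigma> * int m * int n)) / g (of_int (\<sigma> * int n)))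
        \<longlongrightarrow> complex_of_real (real m) powr \<beta>) sequentially"
      using \<open>m \<ge> 1\<close> by (intro ratio) simp
    ultimately have "((\<lambda>n. 1) \<longlongrightarrow> complex_of_real (real m) powr \<beta>) sequentially"
      by (intro Lim_transform_eventually[of _ _ _ "\<lambda>n. 1"])
    then show "complex_of_real (real m) powr \<beta> = 1" by (simp add: LIMSEQ_const_iff)
  qed
qed

lemma unimodular_periodic_asymp_exp:
  fixes g :: "real \<Rightarrow> complex" and F :: "real filter"
  assumes lam: "norm lam = 1" and per: "\<forall>t. g (t + 1) = lam * g t"
    and F: "F = at_top \<or> F = at_bot"
    and ae: "asymp_exp (\<lambda>t. (\<i> - complex_of_real t) powr (2 - r) * g t) k b F"
  shows "(\<forall>t. g t = 0)
    \<or> (\<exists>c. (\<forall>t. g t = c) \<and> lam = 1 \<and> (\<exists>m::int. r = of_int m \<and> k + 2 \<le> m))"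
proof -
  have F_inf: "F \<le> at_infinity" using F at_top_le_at_infinity at_bot_le_at_infinity by auto
  show ?thesis
  proof (cases "\<exists>n\<ge>k. b n \<noteq> 0")
    case False
    then have "(g \<longlongrightarrow> 0) F" by (intro asymp_exp_zero_coeffs_tendsto_0[OF F_inf ae]) auto
    then have "((\<lambda>t. norm (g t)) \<longlongrightarrow> 0) F" by (rule tendsto_norm_zero)
    moreover have "\<forall>t. norm (g (t + 1)) = norm (g t)" using per lam by (simp add: norm_mult)
    ultimately have "norm (g t) = 0" for t using F by (intro periodic_tendsto_imp_const)
    then show ?thesis by simp
  next
    case True
    then obtain n where "k \<le> n" "b n \<noteq> 0" by blast
    then obtain p where p: "k \<le> p" "b p \<noteq> 0" "\<And>j. k \<le> j \<Longrightarrow> j < p \<Longrightarrow> b j = 0"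
      using first_nonzero_coeff by blast
    define v where "v t = (\<i> - complex_of_real t) powr (2 - r) * g t * (\<i> - complex_of_real t) powi p" for t
    have v: "(v \<longlongrightarrow> b p * (-1) powi p) F"
      unfolding v_def by (rule asymp_exp_weighted_tendsto[OF F_inf ae p(1,3)])
    have g_v: "g t = (\<i> - complex_of_real t) powr (r - 2 - of_int p) * v t" for t
      unfolding v_def by (rule powr_weight_split)
    have "lam \<noteq> 0" using lam by auto
    then have lam_1: "lam = 1" and "r - 2 - of_int p = 0"
      using mult_periodic_asymp_powr[OF F per _ g_v v] p(2) by auto
    moreover have "(\<i> - complex_of_real t) powr 0 = 1" for t by (simp add: powr_def complex_eq_iff)
    ultimately have "g = v" by (simp add: g_v fun_eq_iff)
    then have "(g \<longlongrightarrow> b p * (-1) powi p) F" using v by simp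
    then have "g t = b p * (-1) powi p" for t
      using F per lam_1 by (intro periodic_tendsto_imp_const) auto
    then have "\<forall>t. g t = b p * (-1) powi p" by blast
    moreover have "r = of_int (p + 2)" using \<open>r - 2 - of_int p = 0\<close> by (simp add: algebra_simps)
    moreover have "k + 2 \<le> p + 2" using p(1) by simp
    ultimately show ?thesis using lam_1 by blast
  qed
qed

lemma periodic_asymp_exp_one_side:
  fixes g :: "real \<Rightarrow> complex" and F :: "real filter"
  assumes "lam \<noteq> 0" and cont: "continuous_on UNIV g" and per: "\<forall>t. g (t + 1) = lam * g t"
    and F: "F = at_top \<or> F = at_bot"
    and ae: "asymp_exp (\<lambda>t. (\<i> - complex_of_real t) powr (2 - r) * g t) k b F"
  shows "if lam = 1 \<and> (\<exists>m::int. r = of_int m \<and> k + 2 \<le> m) then \<exists>c. \<forall>t. g t = c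
         else if norm lam = 1 then \<forall>t. g t = 0
         else asymp_zero g F"
proof (cases "norm lam = 1")
  case True
  then show ?thesis using unimodular_periodic_asymp_exp[OF True per F ae] by auto
next
  case False
  have F_inf: "F \<le> at_infinity" using F at_top_le_at_infinity at_bot_le_at_infinity by auto
  have "asymp_zero g F"
  proof (cases "(F = at_top \<and> norm lam > 1) \<or> (F = at_bot \<and> norm lam < 1)")
    case True
    obtain K M where "eventually (\<lambda>t. norm (g t) \<le> K * \<bar>t\<bar> ^ M) F"
      using asymp_exp_polynomial_bound[OF F_inf ae] .
    then have "g t = 0" for t by (rule mult_periodic_growing_side_eq_0[OF per \<open>lam \<noteq> 0\<close> True])
    then show ?thesis by (simp add: asymp_zero_def exI[of _ 0])
  next
    case False
    then have "(F = at_top \<and> norm lam < 1) \<or> (F = at_bot \<and> norm lam > 1)"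
      using F \<open>norm lam \<noteq> 1\<close> by auto
    then show ?thesis by (rule mult_periodic_decaying_side_asymp_zero[OF per \<open>lam \<noteq> 0\<close> cont])
  qed
  then show ?thesis using False by auto
qed

lemma periodic_asymp_exp_two_sides:
  fixes g :: "real \<Rightarrow> complex"
  assumes "lam \<noteq> 0" and per: "\<forall>t. g (t + 1) = lam * g t"
    and top: "asymp_exp (\<lambda>t. (\<i> - complex_of_real t) powr (2 - r) * g t) k b at_top"
    and bot: "asymp_exp (\<lambda>t. (\<i> - complex_of_real t) powr (2 - r) * g t) k b at_bot"
  shows "if lam = 1 \<and> r \<in> \<int>
         then \<exists>c. (\<forall>t. g t = c) \<and> (c \<noteq> 0 \<longrightarrow> (\<exists>m::int. r = of_int m \<and> k + 2 \<le> m))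
         else \<forall>t. g t = 0"
proof (cases "norm lam = 1")
  case True
  then show ?thesis using unimodular_periodic_asymp_exp[OF True per _ top] by auto
next
  case False
  then consider "norm lam > 1" | "norm lam < 1" by linarith
  then have "g t = 0" for t
  proof cases
    case 1
    obtain K M where "eventually (\<lambda>t. norm (g t) \<le> K * \<bar>t\<bar> ^ M) at_top"
      using asymp_exp_polynomial_bound[OF at_top_le_at_infinity top] .
    then show ?thesis using 1 by (intro mult_periodic_growing_side_eq_0[OF per \<open>lam \<noteq> 0\<close>]) auto
  next
    case 2
    obtain K M where "eventually (\<lambda>t. norm (g t) \<le> K * \<bar>t\<bar> ^ M) at_bot"
      using asymp_exp_polynomial_bound[OF at_bot_le_at_infinity bot] .
    then show ?thesis using 2 by (intro mult_periodic_growing_side_eq_0[OF per \<open>lam \<noteq> 0\<close>]) auto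
  qed
  then show ?thesis using False by auto
qed

lemma filtermap_sign_at_top:
  fixes eps :: int
  assumes "eps \<in> {1, -1}"
  shows "filtermap (\<lambda>s. real_of_int eps * s) at_top = at_top
       \<or> filtermap (\<lambda>s. real_of_int eps * s) at_top = at_bot"
  using assms by (auto simp: at_bot_mirror filtermap_ident)

theorem lemma3p4:
  fixes r lam :: complex and f :: "complex \<Rightarrow> complex"
  assumes "lam \<noteq> 0"
    and "f \<in> D_omega_inf r"
    and "\<forall>t. Im t < 0 \<longrightarrow> f (t + 1) = lam * f t"
  shows
   "(\<forall>k b. asymp_exp (\<lambda>t. Pop r f (complex_of_real t)) k b at_top \<and>
            asymp_exp (\<lambda>t. Pop r f (complex_of_real t)) k b at_bot \<longrightarrow>
      (if lam = 1 \<and> r \<in> \<int> then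
         (\<exists>c. (\<forall>t. Im t \<le> 0 \<longrightarrow> f t = c) \<and>
              (c \<noteq> 0 \<longrightarrow> (\<exists>m::int. r = of_int m \<and> k + 2 \<le> m)))
       else (\<forall>t. Im t \<le> 0 \<longrightarrow> f t = 0)))
  \<and> (\<forall>(eps::int) k b. eps \<in> {1, -1} \<and>
        asymp_exp (\<lambda>t. Pop r f (complex_of_real t)) k b (filtermap (\<lambda>s. real_of_int eps * s) at_top) \<longrightarrow>
      (if lam = 1 \<and> (\<exists>m::int. r = of_int m \<and> k + 2 \<le> m) then
         (\<exists>c. \<forall>t. Im t \<le> 0 \<longrightarrow> f t = c)
       else if norm lam = 1 then (\<forall>t. Im t \<le> 0 \<longrightarrow> f t = 0)
       else asymp_zero (\<lambda>t. f (complex_of_real t)) (filtermap (\<lambda>s. real_of_int eps * s) at_top)))"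
proof -
  define g where "g = (\<lambda>t::real. f (complex_of_real t))"
  have Pop_g: "(\<lambda>t. Pop r f (complex_of_real t)) = (\<lambda>t. (\<i> - complex_of_real t) powr (2 - r) * g t)"
    by (simp add: Pop_def g_def)
  have cont: "continuous_on UNIV g"
    unfolding g_def by (rule D_omega_inf_continuous_on_real[OF assms(2)])
  have per: "\<forall>t. g (t + 1) = lam * g t"
  proof
    fix t
    have "f (complex_of_real t + 1) = lam * f (complex_of_real t)"
      by (rule D_omega_inf_periodic_closed_lower_hp[OF assms(2,3)]) simp
    then show "g (t + 1) = lam * g t" by (simp add: g_def)
  qed
  have lift: "\<forall>z. Im z \<le> 0 \<longrightarrow> f z = c" if "\<forall>t. g t = c" for c
    using D_omega_inf_const_on_real_imp_const[OF assms(2), of c] that unfolding g_def by blast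
  show ?thesis
  proof (intro conjI allI impI, goal_cases)
    case (1 k b)
    then show ?case
      using periodic_asymp_exp_two_sides[OF assms(1) per, of r k b] lift
      unfolding Pop_g by (auto split: if_splits)
  next
    case (2 eps k b)
    then show ?case
      using periodic_asymp_exp_one_side[OF assms(1) cont per filtermap_sign_at_top, of eps r k b] lift
      unfolding Pop_g g_def[symmetric] by (auto split: if_splits)
  qed
qed

end
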